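(* Let $(P,\preceq)$ be a locally finite meet semilattice, $S=\{x_1,\dots,x_n\}\subseteq P$ a finite meet closed set, and suppose $x_i\in S$ generates a double-chain set in $S$, with $\mathrm{meetcl}(C_S(x_i))\setminus C_S(x_i)=A_i\cup B_i$, $A_i\cap B_i=\emptyset$, $A_i,B_i$ chains. Let $x_a$ and $x_b$ be the top elements of $A_i$ and $B_i$ (if one chain is empty, $x_a=x_b$ is the top of the other). For $x_k\in A_i\cup B_i$ let $\eta(x_k)$ be the number of elements $z\in C_S(x_i)$ attached to $x_k$ (i.e. covering $x_k$ in $\mathrm{meetcl}(C_S(x_i))$). (I) If no element of $C_S(x_i)$ is attached to both chains, then $\mu_S(x_j,x_i)=1$ if $x_j=x_i$; $=-1$ if $x_j\in C_S(x_i)$; $=\eta(x_j)-1$ if $x_j\in\{x_a,x_b\}$ is maximal in $A_i\cup B_i$; $=\eta(x_j)$ if $x_j\in\{x_a,x_b\}$ is not maximal in $A_i\cup B_i$; $=\eta(x_j)$ if $x_j\in A_i\cup B_i$ is not maximal in $A_i\cup B_i$ and $x_j\ne x_a\wedge x_b$; $=\eta(x_j)+1$ if $x_a,x_b$ are incomparable and $x_j=x_a\wedge x_b\in A_i\cup B_i$; and $=0$ otherwise. (II) If exactly one element $x_p\in C_S(x_i)$ is attached to some $x_q\in A_i$ and to some $x_r\in B_i$, then $\mu_S(x_j,x_i)=1$ if $x_j=x_i$; $=-1$ if $x_j\in C_S(x_i)$; $=\eta(x_j)-1$ if $x_j=x_a$ or $x_j=x_b$; $=\eta(x_j)$ if $x_j\in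 A_i\cup B_i$ with $x_j\neq x_a$, $x_j\ne x_b$; and $=0$ otherwise.
   Context: $\mu_S$ is the Möbius function of the finite poset $(S,\preceq)$: $\mu_S(x,x)=1$ and $\mu_S(y,x)=-\sum_{y\prec w\preceq x,\ w\in S}\mu_S(w,x)$ for $y\prec x$, and $\mu_S(y,x)=0$ if $y\not\preceq x$. $C_S(x)$ is the set of elements of $S$ covered by $x$ in $S$; $\mathrm{meetcl}(C)$ is the set of all finite meets of elements of $C$. An element $x\in S$ generates a double-chain set in $S$ if $\mathrm{meetcl}(C_S(x))\setminus C_S(x)$ is a union of two disjoint (possibly empty) chains. An element $z\in C_S(x_i)$ is attached to $x_k\in A_i\cup B_i$ if $z$ covers $x_k$ in the poset $\mathrm{meetcl}(C_S(x_i))$; $z$ is attached to a chain if it is attached to some element of it. *)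

theory Defs
  imports Main
begin

function mobius :: "'a::order set \<Rightarrow> 'a \<Rightarrow> 'a \<Rightarrow> int" where
  "mobius S y x =
     (if finite S \<and> y \<in> S \<and> x \<in> S \<and> y \<le> x then
        (if y = x then 1 else - (\<Sum>w\<in>{w\<in>S. y < w \<and> w \<le> x}. mobius S w x))
      else 0)"
  by pat_completeness auto
termination
proof (relation "measure (\<lambda>(S, y, x). card {v\<in>S. y \<le> v \<and> v \<le> x})")
  show "wf (measure (\<lambda>(S, y, x). card {v\<in>S. y \<le> v \<and> v \<le> x}))" by simp
next
  fix S :: "'a set" and y x w
  assume h: "finite S \<and> y \<in> S \<and> x \<in> S \<and> y \<le> x" "y \<noteq> x" "w \<in> {w\<in>S. y < w \<and> w \<le> x}"
  have "{v\<in>S. w \<le> v \<and> v \<le> x} \<subset> {v\<in>S. y \<le> v \<and> v \<le> x}"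
  proof
    show "{v\<in>S. w \<le> v \<and> v \<le> x} \<subseteq> {v\<in>S. y \<le> v \<and> v \<le> x}"
      using h(3) by (blast intro: order.trans order.strict_implies_order)
    show "{v\<in>S. w \<le> v \<and> v \<le> x} \<noteq> {v\<in>S. y \<le> v \<and> v \<le> x}"
    proof
      assume e: "{v\<in>S. w \<le> v \<and> v \<le> x} = {v\<in>S. y \<le> v \<and> v \<le> x}"
      have "y \<in> {v\<in>S. y \<le> v \<and> v \<le> x}" using h(1) by simp
      then have "w \<le> y" using e by blast
      then show False using h(3) by (simp add: leD)
    qed
  qed
  then have "card {v\<in>S. w \<le> v \<and> v \<le> x} < card {v\<in>S. y \<le> v \<and> v \<le> x}"
    using h by (intro psubset_card_mono) auto
  then show "((S, w, x), S, y, x) \<in> measure (\<lambda>(S, y, x). card {v\<in>S. y \<le> v \<and> v \<le> x})"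
    by simp
qed

definition covered_in :: "'a::order set \<Rightarrow> 'a \<Rightarrow> 'a set" where
  "covered_in S x = {y\<in>S. y < x \<and> \<not> (\<exists>w\<in>S. y < w \<and> w < x)}"

definition covers_in :: "'a::order set \<Rightarrow> 'a \<Rightarrow> 'a \<Rightarrow> bool" where
  "covers_in T z y \<longleftrightarrow> y \<in> T \<and> z \<in> T \<and> y < z \<and> \<not> (\<exists>w\<in>T. y < w \<and> w < z)"

definition meetcl :: "'a::semilattice_inf set \<Rightarrow> 'a set" where
  "meetcl C = {Inf_fin D | D. D \<subseteq> C \<and> D \<noteq> {} \<and> finite D}"

definition meet_closed :: "'a::semilattice_inf set \<Rightarrow> bool" where
  "meet_closed S \<longleftrightarrow> (\<forall>x\<in>S. \<forall>y\<in>S. inf x y \<in> S)"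

definition locally_finite :: "'a::order itself \<Rightarrow> bool" where
  "locally_finite _ \<longleftrightarrow> (\<forall>x y :: 'a. finite {x..y})"

definition is_chain :: "'a::order set \<Rightarrow> bool" where
  "is_chain A \<longleftrightarrow> (\<forall>x\<in>A. \<forall>y\<in>A. x \<le> y \<or> y \<le> x)"

definition attached :: "'a::semilattice_inf set \<Rightarrow> 'a \<Rightarrow> 'a \<Rightarrow> 'a \<Rightarrow> bool" where
  "attached S x z xk \<longleftrightarrow> z \<in> covered_in S x \<and> covers_in (meetcl (covered_in S x)) z xk"

definition attached_to_set :: "'a::semilattice_inf set \<Rightarrow> 'a \<Rightarrow> 'a \<Rightarrow> 'a set \<Rightarrow> bool" where
  "attached_to_set S x z A \<longleftrightarrow> (\<exists>xk\<in>A. attached S x z xk)"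

definition eta :: "'a::semilattice_inf set \<Rightarrow> 'a \<Rightarrow> 'a \<Rightarrow> int" where
  "eta S x xk = int (card {z \<in> covered_in S x. attached S x z xk})"

definition maximal_in :: "'a::order set \<Rightarrow> 'a \<Rightarrow> bool" where
  "maximal_in T x \<longleftrightarrow> x \<in> T \<and> \<not> (\<exists>y\<in>T. x < y)"

definition is_top_of :: "'a::order set \<Rightarrow> 'a \<Rightarrow> bool" where
  "is_top_of A t \<longleftrightarrow> t \<in> A \<and> (\<forall>y\<in>A. y \<le> t)"

end

theory Submission
  imports Defs
begin

text \<open>
  Above an element y < x of S, the elements of the meet closure M of the coatoms C of x
  form the principal upset of the meet of the coatoms above y. Hence the Moebius function
  \<mu>(-, x) is the unique f with f x = 1, f = 0 off M \<union> {x}, and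
  f x + (\<Sum>w\<in>M, m \<le> w. f w) = 0 for every m \<in> M.

  We take f = -1 on C and f = \<eta> + \<delta> on the chains A \<union> B. Every coatom above m is attached
  to exactly one element above m of each chain it reaches, so double counting gives
  \<Sum>{\<eta> w | w \<in> A \<union> B, m \<le> w} = #{c \<in> C | m \<le> c} + #bridges(m), where a bridge above m
  is a coatom attached to an element of A and to an element of B above m. Thus \<delta> has to
  sum to -1 - #bridges(m) above every m; the two cases of the theorem are two corrections \<delta>
  doing this. Without bridges, \<delta> is -1 at the maximal elements, compensated by +1 at
  inf xa xb when the tops are incomparable. With a single bridge p, attached to q \<in> A and
  r \<in> B, p is a bridge above m exactly when m lies below both tops, and \<delta> is -1 at xa and xb.
\<close>

declare mobius.simps [simp del]

lemma card_interval_less: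
  fixes S :: "'a::order set"
  assumes "finite S" "y \<in> S" "y < w" "w \<le> x"
  shows "card {v\<in>S. w \<le> v \<and> v \<le> x} < card {v\<in>S. y \<le> v \<and> v \<le> x}"
proof (rule psubset_card_mono)
  have "y \<in> {v\<in>S. y \<le> v \<and> v \<le> x} - {v\<in>S. w \<le> v \<and> v \<le> x}"
    using assms by auto
  moreover have "{v\<in>S. w \<le> v \<and> v \<le> x} \<subseteq> {v\<in>S. y \<le> v \<and> v \<le> x}"
    using assms(3) by auto
  ultimately show "{v\<in>S. w \<le> v \<and> v \<le> x} \<subset> {v\<in>S. y \<le> v \<and> v \<le> x}"
    by blast
qed (use assms in simp)

lemma mobius_eq_if_interval_sums_vanish:
  fixes S :: "'a::order set" and f :: "'a \<Rightarrow> int"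
  assumes finS: "finite S" and xS: "x \<in> S" and f_top: "f x = 1"
    and f_not_below: "\<And>y. y \<in> S \<Longrightarrow> \<not> y \<le> x \<Longrightarrow> f y = 0"
    and interval_sum: "\<And>y. y \<in> S \<Longrightarrow> y < x \<Longrightarrow> (\<Sum>w\<in>{w\<in>S. y \<le> w \<and> w \<le> x}. f w) = 0"
    and yS: "y \<in> S"
  shows "mobius S y x = f y"
  using yS
proof (induction "card {v\<in>S. y \<le> v \<and> v \<le> x}" arbitrary: y rule: less_induct)
  case (less y)
  consider "\<not> y \<le> x" | "y = x" | "y < x"
    by (auto simp: order.order_iff_strict)
  then show ?case
  proof cases
    case 1
    then show ?thesis using less.prems f_not_below by (simp add: mobius.simps)
  next
    case 2
    then show ?thesis using finS xS f_top by (simp add: mobius.simps)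
  next
    case 3
    define W where "W = {w\<in>S. y < w \<and> w \<le> x}"
    have IH: "mobius S w x = f w" if "w \<in> W" for w
      using that less.hyps card_interval_less[OF finS less.prems] unfolding W_def by blast
    have "mobius S y x = - (\<Sum>w\<in>W. f w)"
      using less.prems 3 finS xS IH unfolding W_def by (simp add: mobius.simps)
    moreover have "{w\<in>S. y \<le> w \<and> w \<le> x} = insert y W" "y \<notin> W" "finite W"
      using less.prems 3 finS unfolding W_def by auto
    ultimately show ?thesis
      using interval_sum[OF less.prems 3] by simp
  qed
qed

lemma card_eq_of_bool_nonempty:
  assumes "finite X" "\<And>a b. a \<in> X \<Longrightarrow> b \<in> X \<Longrightarrow> a = b"
  shows "card X = of_bool (X \<noteq> {})"
  using card_le_Suc0_iff_eq[OF assms(1)] assms by (cases "X = {}") (auto simp: le_Suc_eq)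

lemma card_above_pair:
  fixes a b m :: "'a::order"
  assumes "a \<noteq> b" "m \<le> a \<or> m \<le> b"
  shows "card {w\<in>{a, b}. m \<le> w} = 1 + of_bool (m \<le> a \<and> m \<le> b)"
proof -
  have "{w\<in>{a, b}. m \<le> w} = (if m \<le> a then {a} else {}) \<union> (if m \<le> b then {b} else {})"
    by auto
  then show ?thesis using assms by auto
qed

lemma inf_mem_iff_comparable:
  fixes a b :: "'a::semilattice_inf"
  shows "inf a b \<in> {a, b} \<longleftrightarrow> a \<le> b \<or> b \<le> a"
  by (metis inf.absorb_iff1 inf.absorb_iff2 insert_iff singletonD)

locale coatom_meetcl =
  fixes S :: "'a::semilattice_inf set" and x :: 'a
  assumes finite_S: "finite S" and meet_closed_S: "meet_closed S" and x_in_S: "x \<in> S"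
begin

abbreviation "C \<equiv> covered_in S x"
abbreviation "M \<equiv> meetcl C"

lemma covered_subset: "C \<subseteq> S"
  by (auto simp: covered_in_def)

lemma covered_less: "c \<in> C \<Longrightarrow> c < x"
  by (auto simp: covered_in_def)

lemma covered_antichain: "c1 \<in> C \<Longrightarrow> c2 \<in> C \<Longrightarrow> c1 \<le> c2 \<Longrightarrow> c1 = c2"
  unfolding covered_in_def using order.order_iff_strict by blast

lemma finite_covered: "finite C"
  using covered_subset finite_S finite_subset by blast

lemma Inf_fin_in_S: "finite E \<Longrightarrow> E \<noteq> {} \<Longrightarrow> E \<subseteq> S \<Longrightarrow> Inf_fin E \<in> S"
  by (induction E rule: finite_ne_induct) (use meet_closed_S in \<open>auto simp: meet_closed_def\<close>)

lemma meetclE: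
  assumes "w \<in> M"
  obtains E where "E \<subseteq> C" "E \<noteq> {}" "finite E" "w = Inf_fin E"
  using assms unfolding meetcl_def by blast

lemma meetcl_subset: "M \<subseteq> S"
  using Inf_fin_in_S covered_subset by (auto elim!: meetclE)

lemma finite_meetcl: "finite M"
  using meetcl_subset finite_S finite_subset by blast

lemma covered_subset_meetcl: "C \<subseteq> M"
  unfolding meetcl_def by (auto intro!: exI[of _ "{_}"])

lemma meetcl_below_covered: "w \<in> M \<Longrightarrow> \<exists>c\<in>C. w \<le> c"
  by (elim meetclE) (use Inf_fin.coboundedI in blast)

lemma meetcl_less: "w \<in> M \<Longrightarrow> w < x"
  using meetcl_below_covered covered_less order.strict_trans1 by blast

lemma meetcl_inf: "w1 \<in> M \<Longrightarrow> w2 \<in> M \<Longrightarrow> inf w1 w2 \<in> M"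
proof (elim meetclE)
  fix E1 E2
  assume "E1 \<subseteq> C" "E1 \<noteq> {}" "finite E1" "w1 = Inf_fin E1"
    and "E2 \<subseteq> C" "E2 \<noteq> {}" "finite E2" "w2 = Inf_fin E2"
  then have "inf w1 w2 = Inf_fin (E1 \<union> E2)" "E1 \<union> E2 \<subseteq> C" "finite (E1 \<union> E2)"
    by (auto simp: Inf_fin.union)
  then show "inf w1 w2 \<in> M"
    using \<open>E1 \<noteq> {}\<close> unfolding meetcl_def by blast
qed

lemma meetcl_above_covered: "c \<in> C \<Longrightarrow> w \<in> M \<Longrightarrow> c \<le> w \<Longrightarrow> w = c"
  using meetcl_below_covered covered_antichain by (metis order.antisym order.trans)

lemma covered_above: "y \<in> S \<Longrightarrow> y < x \<Longrightarrow> \<exists>c\<in>C. y \<le> c"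
proof -
  assume "y \<in> S" "y < x"
  then obtain c where c: "c \<in> {w\<in>S. y \<le> w \<and> w < x}"
    and c_max: "\<forall>b\<in>{w\<in>S. y \<le> w \<and> w < x}. c \<le> b \<longrightarrow> c = b"
    using finite_has_maximal2[of "{w\<in>S. y \<le> w \<and> w < x}" y] finite_S by auto
  have "c \<in> C"
    unfolding covered_in_def using c c_max by (auto dest: order.strict_implies_order)
  then show ?thesis using c by blast
qed

text \<open>The witness is the meet of the coatoms above y.\<close>

lemma meetcl_upset_principal:
  assumes "y \<in> S" "y < x"
  shows "\<exists>m\<in>M. \<forall>w\<in>M. y \<le> w \<longleftrightarrow> m \<le> w"
proof -
  define Cy where "Cy = {c\<in>C. y \<le> c}"
  have Cy: "Cy \<noteq> {}" "finite Cy" "Cy \<subseteq> C"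
    using covered_above assms finite_covered unfolding Cy_def by auto
  then have mM: "Inf_fin Cy \<in> M"
    unfolding meetcl_def by blast
  have "y \<le> w \<longleftrightarrow> Inf_fin Cy \<le> w" if "w \<in> M" for w
  proof
    assume "y \<le> w"
    obtain E where E: "E \<subseteq> C" "E \<noteq> {}" "finite E" "w = Inf_fin E"
      using \<open>w \<in> M\<close> by (elim meetclE)
    then have "E \<subseteq> Cy"
      using \<open>y \<le> w\<close> Inf_fin.bounded_iff unfolding Cy_def by blast
    then show "Inf_fin Cy \<le> w"
      using E Cy Inf_fin.bounded_iff Inf_fin.coboundedI by (metis subsetD)
  next
    assume "Inf_fin Cy \<le> w"
    moreover have "y \<le> Inf_fin Cy"
      using Cy Inf_fin.bounded_iff unfolding Cy_def by auto
    ultimately show "y \<le> w" by simp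
  qed
  then show ?thesis using mM by blast
qed

lemma interval_sum_eq_meetcl_sum:
  fixes f :: "'a \<Rightarrow> int"
  assumes f_outside: "\<And>y. y \<in> S \<Longrightarrow> y \<notin> M \<Longrightarrow> y \<noteq> x \<Longrightarrow> f y = 0"
    and "y \<in> S" "y < x"
  obtains m where "m \<in> M"
    "(\<Sum>w\<in>{w\<in>S. y \<le> w \<and> w \<le> x}. f w) = f x + (\<Sum>w\<in>{w\<in>M. m \<le> w}. f w)"
proof -
  obtain m where m: "m \<in> M" "\<forall>w\<in>M. y \<le> w \<longleftrightarrow> m \<le> w"
    using meetcl_upset_principal assms(2,3) by blast
  define R where "R = insert x {w\<in>M. m \<le> w}"
  have "R \<subseteq> {w\<in>S. y \<le> w \<and> w \<le> x}"
    using R_def x_in_S assms(3) meetcl_subset meetcl_less m by (auto intro: order.strict_implies_order)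
  moreover have "\<forall>w\<in>{w\<in>S. y \<le> w \<and> w \<le> x} - R. f w = 0"
    using f_outside m unfolding R_def by auto
  ultimately have "(\<Sum>w\<in>{w\<in>S. y \<le> w \<and> w \<le> x}. f w) = sum f R"
    using finite_S by (intro sum.mono_neutral_right) auto
  also have "\<dots> = f x + (\<Sum>w\<in>{w\<in>M. m \<le> w}. f w)"
    unfolding R_def using finite_meetcl meetcl_less by (subst sum.insert) auto
  finally show ?thesis using that m(1) by blast
qed

lemma mobius_eq_if_meetcl_sums_vanish:
  fixes f :: "'a \<Rightarrow> int"
  assumes "f x = 1"
    and "\<And>y. y \<in> S \<Longrightarrow> y \<notin> M \<Longrightarrow> y \<noteq> x \<Longrightarrow> f y = 0"
    and "\<And>m. m \<in> M \<Longrightarrow> f x + (\<Sum>w\<in>{w\<in>M. m \<le> w}. f w) = 0"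
    and "y \<in> S"
  shows "mobius S y x = f y"
proof (rule mobius_eq_if_interval_sums_vanish[of S x f])
  show "finite S" "x \<in> S" "f x = 1" "y \<in> S"
    by (fact finite_S x_in_S assms(1,4))+
  show "f y = 0" if "y \<in> S" "\<not> y \<le> x" for y
  proof -
    have "y \<notin> M"
      using that(2) meetcl_less less_imp_le by blast
    then show ?thesis using assms(2) that by auto
  qed
  show "(\<Sum>w\<in>{w\<in>S. y \<le> w \<and> w \<le> x}. f w) = 0" if y: "y \<in> S" "y < x" for y
  proof -
    obtain m where "m \<in> M" "(\<Sum>w\<in>{w\<in>S. y \<le> w \<and> w \<le> x}. f w) = f x + (\<Sum>w\<in>{w\<in>M. m \<le> w}. f w)"
      by (rule interval_sum_eq_meetcl_sum[where f = f, OF assms(2) y])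
    then show ?thesis using assms(3) by simp
  qed
qed

end

locale double_chain = coatom_meetcl +
  fixes A B :: "'a set" and xa xb :: 'a
  assumes meetcl_minus_covered: "M - C = A \<union> B"
    and disjoint_chains: "A \<inter> B = {}" and chain_A: "is_chain A" and chain_B: "is_chain B"
    and top_A: "A \<noteq> {} \<Longrightarrow> is_top_of A xa" and top_B: "B \<noteq> {} \<Longrightarrow> is_top_of B xb"
    and empty_A: "A = {} \<Longrightarrow> xa = xb" and empty_B: "B = {} \<Longrightarrow> xb = xa"
begin

abbreviation "D \<equiv> A \<union> B"

lemma mem_chains_iff: "w \<in> D \<longleftrightarrow> w \<in> M \<and> w \<notin> C"
  using meetcl_minus_covered by auto

lemma finite_chains: "finite D"
  using mem_chains_iff finite_meetcl by (metis finite_subset subsetI)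

lemma le_top_A: "w \<in> A \<Longrightarrow> w \<le> xa"
  using top_A unfolding is_top_of_def by auto

lemma le_top_B: "w \<in> B \<Longrightarrow> w \<le> xb"
  using top_B unfolding is_top_of_def by auto

lemma tops_mem: "D \<noteq> {} \<Longrightarrow> xa \<in> D" "D \<noteq> {} \<Longrightarrow> xb \<in> D"
  using top_A top_B empty_A empty_B unfolding is_top_of_def by (metis Un_empty Un_iff)+

lemma maximal_imp_top: "maximal_in D w \<Longrightarrow> w = xa \<or> w = xb"
  using tops_mem le_top_A le_top_B unfolding maximal_in_def
  by (metis UnE empty_iff order.order_iff_strict)

lemma maximal_iff_top_if_incomparable:
  assumes "\<not> (xa \<le> xb \<or> xb \<le> xa)"
  shows "maximal_in D w \<longleftrightarrow> w = xa \<or> w = xb"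
proof
  have tops: "xa \<in> D" "xb \<in> D"
    using assms tops_mem empty_A by auto
  have "\<not> xa < y" "\<not> xb < y" if "y \<in> D" for y
    using that assms le_top_A le_top_B
    by (metis UnE order.strict_iff_not order.strict_trans2 order.strict_implies_order)+
  then show "w = xa \<or> w = xb \<Longrightarrow> maximal_in D w"
    using tops unfolding maximal_in_def by blast
qed (fact maximal_imp_top)

lemma card_maximal_above_if_comparable:
  assumes "xa \<le> xb \<or> xb \<le> xa" "m \<in> D"
  shows "card {w\<in>D. m \<le> w \<and> maximal_in D w} = 1"
proof -
  define t where "t = (if xa \<le> xb then xb else xa)"
  have t: "t \<in> D"
    using assms(2) tops_mem unfolding t_def by auto
  have below_t: "w \<le> t" if "w \<in> D" for w
    using that le_top_A le_top_B assms(1) unfolding t_def by (auto intro: order.trans)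
  have "{w\<in>D. m \<le> w \<and> maximal_in D w} = {t}"
    using t below_t assms(2) unfolding maximal_in_def
    by (auto simp: order.strict_iff_not intro: order.antisym)
  then show ?thesis by simp
qed

lemma attachedD:
  assumes "attached S x c w"
  shows "c \<in> C" "w \<in> D" "w < c" "\<not> (\<exists>v\<in>M. w < v \<and> v < c)"
proof -
  show "c \<in> C" and "w < c" and "\<not> (\<exists>v\<in>M. w < v \<and> v < c)"
    using assms unfolding attached_def covers_in_def by auto
  moreover have "w \<in> M"
    using assms unfolding attached_def covers_in_def by auto
  ultimately show "w \<in> D"
    using covered_antichain mem_chains_iff by (metis order.strict_iff_not)
qed

lemma attached_above:
  assumes "c \<in> C" "m \<in> D" "m \<le> c"
  shows "\<exists>w\<in>D. m \<le> w \<and> attached S x c w"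
proof -
  have "m \<in> {w\<in>M. w < c}"
    using assms mem_chains_iff order.order_iff_strict by auto
  then obtain w where w: "w \<in> {w\<in>M. w < c}" "m \<le> w"
    and w_max: "\<forall>v\<in>{w\<in>M. w < c}. w \<le> v \<longrightarrow> w = v"
    using finite_has_maximal2[of "{w\<in>M. w < c}" m] finite_meetcl by auto
  have "attached S x c w"
    unfolding attached_def covers_in_def
    using w w_max assms(1) covered_subset_meetcl by (auto dest: order.strict_implies_order)
  then show ?thesis using attachedD(2) w(2) by blast
qed

lemma attached_chain_unique:
  assumes "is_chain X" "w1 \<in> X" "w2 \<in> X" "attached S x c w1" "attached S x c w2"
  shows "w1 = w2"
  using assms attachedD(2-4)[OF assms(4)] attachedD(2-4)[OF assms(5)] mem_chains_iff
  unfolding is_chain_def by (metis order.order_iff_strict)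

lemma inf_attached:
  assumes "attached S x p q" "w \<in> D" "q \<le> w"
  shows "inf p w = q"
proof -
  note pq = attachedD[OF assms(1)]
  have "inf p w \<in> M"
    using meetcl_inf covered_subset_meetcl pq(1) assms(2) mem_chains_iff by blast
  moreover have "inf p w \<noteq> p"
    using meetcl_above_covered pq(1) assms(2) mem_chains_iff by (metis inf.absorb_iff1)
  then have "inf p w < p"
    by (simp add: order.strict_iff_order)
  moreover have "q \<le> inf p w"
    using pq(3) assms(3) by (simp add: order.strict_implies_order)
  ultimately show ?thesis
    using pq(4) order.order_iff_strict by blast
qed

text \<open>If m is not below the foot q of the bridge p, then q \<le> m \<le> t gives
  q \<le> inf p t = r, so the other foot r lies strictly between q and p.\<close>

lemma le_bridge_if_comparable:
  assumes "attached S x p q" "attached S x p r" "q \<noteq> r" "q \<le> m \<or> m \<le> q"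
    and "m \<in> D" "t \<in> D" "r \<le> t" "m \<le> t"
  shows "m \<le> p"
proof (cases "m \<le> q")
  case True
  then show ?thesis using attachedD(3)[OF assms(1)] by simp
next
  case False
  then have "q \<le> inf p t"
    using False assms(4,8) attachedD(3)[OF assms(1)] by (simp add: less_imp_le)
  then have "q < r"
    using inf_attached[OF assms(2,6,7)] assms(3) by simp
  then show ?thesis
    using attachedD(2-4)[OF assms(1)] attachedD(2,3)[OF assms(2)] mem_chains_iff by blast
qed

lemma le_feet_if_le_tops:
  assumes "attached S x p q" "attached S x p r" "q \<in> A" "r \<in> B"
    and "m \<in> D" "m \<le> xa" "m \<le> xb"
  shows "m \<le> q" "m \<le> r"
proof -
  have qr: "q \<noteq> r"
    using assms(3,4) disjoint_chains by auto
  have tops: "xa \<in> D" "xb \<in> D"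
    using tops_mem assms(3) by auto
  have "m \<le> p"
  proof (cases "m \<in> A")
    case True
    then have "q \<le> m \<or> m \<le> q"
      using chain_A assms(3) unfolding is_chain_def by blast
    then show ?thesis
      using le_bridge_if_comparable[OF assms(1,2) qr _ assms(5) tops(2) le_top_B[OF assms(4)] assms(7)]
      by blast
  next
    case False
    then have "r \<le> m \<or> m \<le> r"
      using chain_B assms(4,5) unfolding is_chain_def by blast
    then show ?thesis
      using le_bridge_if_comparable[OF assms(2,1) qr[symmetric] _ assms(5) tops(1) le_top_A[OF assms(3)] assms(6)]
      by blast
  qed
  then show "m \<le> q" "m \<le> r"
    using assms(6,7) inf_attached[OF assms(1) tops(1) le_top_A[OF assms(3)]]
      inf_attached[OF assms(2) tops(2) le_top_B[OF assms(4)]]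
    by (metis inf.bounded_iff)+
qed

definition bridges :: "'a \<Rightarrow> 'a set" where
  "bridges m = {c\<in>C. (\<exists>q\<in>A. m \<le> q \<and> attached S x c q) \<and> (\<exists>r\<in>B. m \<le> r \<and> attached S x c r)}"

lemma card_attached_above:
  assumes "m \<in> D" "c \<in> C"
  shows "card {w\<in>D. m \<le> w \<and> attached S x c w} = of_bool (m \<le> c) + of_bool (c \<in> bridges m)"
proof -
  define XA where "XA = {w\<in>A. m \<le> w \<and> attached S x c w}"
  define XB where "XB = {w\<in>B. m \<le> w \<and> attached S x c w}"
  have fin: "finite XA" "finite XB"
    using finite_chains unfolding XA_def XB_def by (auto intro: finite_subset)
  have "card XA = of_bool (XA \<noteq> {})"
    using card_eq_of_bool_nonempty[OF fin(1)] attached_chain_unique[OF chain_A] XA_def by blast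
  moreover have "card XB = of_bool (XB \<noteq> {})"
    using card_eq_of_bool_nonempty[OF fin(2)] attached_chain_unique[OF chain_B] XB_def by blast
  moreover have "XA \<noteq> {} \<or> XB \<noteq> {} \<longleftrightarrow> (\<exists>w\<in>D. m \<le> w \<and> attached S x c w)"
    unfolding XA_def XB_def by blast
  moreover have "(\<exists>w\<in>D. m \<le> w \<and> attached S x c w) \<longleftrightarrow> m \<le> c"
    using attached_above[OF assms(2,1)] attachedD(3) by (meson order_trans less_imp_le)
  moreover have "XA \<noteq> {} \<and> XB \<noteq> {} \<longleftrightarrow> c \<in> bridges m"
    using assms(2) unfolding XA_def XB_def bridges_def by blast
  moreover have "{w\<in>D. m \<le> w \<and> attached S x c w} = XA \<union> XB" "XA \<inter> XB = {}"
    using disjoint_chains unfolding XA_def XB_def by auto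
  ultimately show ?thesis
    using card_Un_disjoint[OF fin] by auto
qed

lemma sum_eta_above:
  assumes "m \<in> D"
  shows "(\<Sum>w\<in>{w\<in>D. m \<le> w}. eta S x w) = int (card {c\<in>C. m \<le> c}) + int (card (bridges m))"
proof -
  define U where "U = {w\<in>D. m \<le> w}"
  have "(\<Sum>w\<in>U. eta S x w) = (\<Sum>w\<in>U. \<Sum>c\<in>C. of_bool (attached S x c w))"
    unfolding eta_def using finite_covered by (simp add: Collect_conj_eq)
  also have "\<dots> = (\<Sum>c\<in>C. \<Sum>w\<in>U. of_bool (attached S x c w))"
    by (rule sum.swap)
  also have "\<dots> = (\<Sum>c\<in>C. of_bool (m \<le> c) + of_bool (c \<in> bridges m))"
    using finite_chains card_attached_above[OF assms]
    by (intro sum.cong) (auto simp: U_def Collect_conj_eq Int_assoc)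
  also have "\<dots> = int (card {c\<in>C. m \<le> c}) + int (card (bridges m))"
    using finite_covered by (simp add: sum.distrib Collect_conj_eq bridges_def Int_absorb1)
  finally show ?thesis unfolding U_def .
qed

lemma inf_tops_mem_if_incomparable:
  assumes "\<not> (xa \<le> xb \<or> xb \<le> xa)"
  shows "inf xa xb \<in> D"
proof -
  have tops: "xa \<in> D" "xb \<in> D"
    using assms tops_mem empty_A by auto
  then have "inf xa xb \<in> M"
    using meetcl_inf mem_chains_iff by blast
  moreover have "inf xa xb \<notin> C"
    using meetcl_above_covered[of "inf xa xb" xa] tops assms mem_chains_iff by (metis inf.cobounded1 inf.absorb_iff1)
  ultimately show ?thesis
    using mem_chains_iff by blast
qed

lemma sum_meetcl_upset:
  "(\<Sum>w\<in>{w\<in>M. m \<le> w}. f w) = (\<Sum>w\<in>{c\<in>C. m \<le> c}. f w) + (\<Sum>w\<in>{w\<in>D. m \<le> w}. f w)"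
proof -
  have "{w\<in>M. m \<le> w} = {c\<in>C. m \<le> c} \<union> {w\<in>D. m \<le> w}"
    "{c\<in>C. m \<le> c} \<inter> {w\<in>D. m \<le> w} = {}"
    using mem_chains_iff covered_subset_meetcl by auto
  then show ?thesis
    using finite_covered finite_chains by (simp add: sum.union_disjoint)
qed

lemma mobius_double_chain:
  fixes \<delta> :: "'a \<Rightarrow> int"
  assumes correction: "\<And>m. m \<in> D \<Longrightarrow> (\<Sum>w\<in>{w\<in>D. m \<le> w}. \<delta> w) = -1 - int (card (bridges m))"
    and "y \<in> S"
  shows "mobius S y x =
    (if y = x then 1 else if y \<in> C then -1 else if y \<in> D then eta S x y + \<delta> y else 0)"
proof -
  define f where
    "f y = (if y = x then 1 else if y \<in> C then -1 else if y \<in> D then eta S x y + \<delta> y else 0)" for y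
  have f_C: "f c = -1" if "c \<in> C" for c
    using that covered_less by (auto simp: f_def)
  have f_D: "f w = eta S x w + \<delta> w" if "w \<in> D" for w
    using that mem_chains_iff meetcl_less by (auto simp: f_def)
  have "mobius S y x = f y"
  proof (rule mobius_eq_if_meetcl_sums_vanish)
    show "f x = 1" "y \<in> S"
      using assms(2) by (simp_all add: f_def)
    show "f z = 0" if "z \<in> S" "z \<notin> M" "z \<noteq> x" for z
      using that covered_subset_meetcl mem_chains_iff by (auto simp: f_def)
    show "f x + (\<Sum>w\<in>{w\<in>M. m \<le> w}. f w) = 0" if "m \<in> M" for m
    proof (cases "m \<in> C")
      case True
      then have "{w\<in>M. m \<le> w} = {m}"
        using meetcl_above_covered covered_subset_meetcl by auto
      then show ?thesis
        using f_C True by (simp add: f_def)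
    next
      case False
      then have m: "m \<in> D"
        using that mem_chains_iff by blast
      have "(\<Sum>w\<in>{w\<in>M. m \<le> w}. f w) = (\<Sum>w\<in>{c\<in>C. m \<le> c}. f w) + (\<Sum>w\<in>{w\<in>D. m \<le> w}. f w)"
        by (rule sum_meetcl_upset)
      also have "\<dots> = - int (card {c\<in>C. m \<le> c})
          + (\<Sum>w\<in>{w\<in>D. m \<le> w}. eta S x w) + (\<Sum>w\<in>{w\<in>D. m \<le> w}. \<delta> w)"
        using f_C f_D by (simp add: sum.distrib)
      also have "\<dots> = -1"
        using sum_eta_above[OF m] correction[OF m] by simp
      finally show ?thesis by (simp add: f_def)
    qed
  qed
  then show ?thesis by (simp add: f_def)
qed

lemma sum_correction_no_bridge:
  assumes "m \<in> D"
  shows "(\<Sum>w\<in>{w\<in>D. m \<le> w}. of_bool (\<not> (xa \<le> xb \<or> xb \<le> xa) \<and> w = inf xa xb)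
      - of_bool (maximal_in D w)) = (-1 :: int)"
proof -
  have "(\<Sum>w\<in>{w\<in>D. m \<le> w}. of_bool (\<not> (xa \<le> xb \<or> xb \<le> xa) \<and> w = inf xa xb)
      - of_bool (maximal_in D w)) = int (card {w\<in>D. m \<le> w \<and> \<not> (xa \<le> xb \<or> xb \<le> xa) \<and> w = inf xa xb})
      - int (card {w\<in>D. m \<le> w \<and> maximal_in D w})"
    using finite_chains by (simp add: sum_subtractf Collect_conj_eq Int_assoc)
  also have "\<dots> = -1"
  proof (cases "xa \<le> xb \<or> xb \<le> xa")
    case True
    then show ?thesis
      using card_maximal_above_if_comparable[OF True assms] by simp
  next
    case False
    have ne: "xa \<noteq> xb" and above: "m \<le> xa \<or> m \<le> xb"
      using False assms le_top_A le_top_B by auto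
    have "{w\<in>D. m \<le> w \<and> maximal_in D w} = {w\<in>{xa, xb}. m \<le> w}"
      using maximal_iff_top_if_incomparable[OF False] tops_mem assms by auto
    moreover have "{w\<in>D. m \<le> w \<and> \<not> (xa \<le> xb \<or> xb \<le> xa) \<and> w = inf xa xb}
        = (if m \<le> xa \<and> m \<le> xb then {inf xa xb} else {})"
      using inf_tops_mem_if_incomparable[OF False] False by auto
    ultimately show ?thesis
      using card_above_pair[OF ne above] by simp
  qed
  finally show ?thesis .
qed

lemma sum_correction_tops:
  assumes "A \<noteq> {}" "B \<noteq> {}" "m \<in> D"
  shows "(\<Sum>w\<in>{w\<in>D. m \<le> w}. - of_bool (w = xa \<or> w = xb)) = -1 - (of_bool (m \<le> xa \<and> m \<le> xb) :: int)"
proof -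
  have tops: "xa \<in> A" "xb \<in> B"
    using assms top_A top_B unfolding is_top_of_def by auto
  then have ne: "xa \<noteq> xb" and above: "m \<le> xa \<or> m \<le> xb"
    using disjoint_chains assms(3) le_top_A le_top_B by auto
  have "{w\<in>D. m \<le> w} \<inter> {w. w = xa \<or> w = xb} = {w\<in>{xa, xb}. m \<le> w}"
    using tops by auto
  then have "card ({w\<in>D. m \<le> w} \<inter> {w. w = xa \<or> w = xb}) = 1 + of_bool (m \<le> xa \<and> m \<le> xb)"
    using card_above_pair[OF ne above] by simp
  moreover have "finite {w\<in>D. m \<le> w}"
    using finite_chains by simp
  then have "(\<Sum>w\<in>{w\<in>D. m \<le> w}. - of_bool (w = xa \<or> w = xb) :: int)
      = - int (card ({w\<in>D. m \<le> w} \<inter> {w. w = xa \<or> w = xb}))"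
    by (simp only: sum_negf sum_of_bool_eq)
  ultimately show ?thesis by simp
qed

lemma mobius_no_bridge:
  assumes "\<not> (\<exists>z\<in>C. attached_to_set S x z A \<and> attached_to_set S x z B)" "y \<in> S"
  shows "mobius S y x =
        (if y = x then 1
         else if y \<in> C then -1
         else if y \<in> {xa, xb} \<and> maximal_in D y then eta S x y - 1
         else if y \<in> {xa, xb} \<and> y \<in> D \<and> \<not> maximal_in D y then eta S x y
         else if y \<in> D \<and> \<not> maximal_in D y \<and> y \<noteq> inf xa xb then eta S x y
         else if \<not> (xa \<le> xb \<or> xb \<le> xa) \<and> y = inf xa xb \<and> y \<in> D then eta S x y + 1
         else 0)"
proof -
  have "bridges m = {}" for m
    using assms(1) unfolding bridges_def attached_to_set_def by blast
  then have "mobius S y x = (if y = x then 1 else if y \<in> C then -1 else if y \<in> D then eta S x y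
      + (of_bool (\<not> (xa \<le> xb \<or> xb \<le> xa) \<and> y = inf xa xb) - of_bool (maximal_in D y)) else 0)"
    using sum_correction_no_bridge
    by (intro mobius_double_chain[OF _ assms(2)]) simp
  moreover have "maximal_in D y \<Longrightarrow> y \<in> D"
    unfolding maximal_in_def by blast
  ultimately show ?thesis
    using maximal_imp_top inf_mem_iff_comparable[of xa xb] by auto
qed

lemma bridges_single_bridge:
  assumes "attached S x p q" "attached S x p r" "q \<in> A" "r \<in> B"
    and p_unique: "\<And>c. c \<in> C \<Longrightarrow> attached_to_set S x c A \<Longrightarrow> attached_to_set S x c B \<Longrightarrow> c = p"
    and "m \<in> D"
  shows "bridges m = (if m \<le> xa \<and> m \<le> xb then {p} else {})"
proof -
  have "bridges m \<subseteq> {p}"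
    using p_unique unfolding bridges_def attached_to_set_def by blast
  moreover have "p \<in> bridges m" if "m \<le> xa" "m \<le> xb"
    using le_feet_if_le_tops[OF assms(1-4,6) that] assms(1-4) attachedD(1)
    unfolding bridges_def by blast
  moreover have "m \<le> xa \<and> m \<le> xb" if c: "c \<in> bridges m" for c
  proof -
    obtain q' r' where "q' \<in> A" "m \<le> q'" "r' \<in> B" "m \<le> r'"
      using c unfolding bridges_def by blast
    then show ?thesis
      using le_top_A le_top_B order.trans by metis
  qed
  ultimately show ?thesis
    by (cases "m \<le> xa \<and> m \<le> xb") auto
qed

lemma mobius_single_bridge:
  assumes "\<exists>!p\<in>C. attached_to_set S x p A \<and> attached_to_set S x p B" "y \<in> S"
  shows "mobius S y x =
        (if y = x then 1
         else if y \<in> C then -1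
         else if y = xa \<or> y = xb then eta S x y - 1
         else if y \<in> D then eta S x y
         else 0)"
proof -
  obtain p where p: "p \<in> C" "attached_to_set S x p A" "attached_to_set S x p B"
    and p_unique: "\<And>c. c \<in> C \<Longrightarrow> attached_to_set S x c A \<Longrightarrow> attached_to_set S x c B \<Longrightarrow> c = p"
    using assms(1) by blast
  obtain q r where q: "q \<in> A" "attached S x p q" and r: "r \<in> B" "attached S x p r"
    using p unfolding attached_to_set_def by blast
  have nonempty: "A \<noteq> {}" "B \<noteq> {}"
    using q r by auto
  then have tops: "xa \<in> D" "xb \<in> D"
    using tops_mem by auto
  have "bridges m = (if m \<le> xa \<and> m \<le> xb then {p} else {})" if "m \<in> D" for m
    by (rule bridges_single_bridge[OF q(2) r(2) q(1) r(1) p_unique that])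
  then have "mobius S y x = (if y = x then 1 else if y \<in> C then -1 else if y \<in> D then eta S x y
      + - of_bool (y = xa \<or> y = xb) else 0)"
    using sum_correction_tops[OF nonempty]
    by (intro mobius_double_chain[OF _ assms(2)]) simp
  then show ?thesis
    using tops by simp
qed

end

theorem theorem3p1:
  fixes S A B :: "'a::semilattice_inf set" and xi xa xb :: 'a
  assumes locfin: "locally_finite TYPE('a)"
    and finS: "finite S" and mcl: "meet_closed S"
    and xiS: "xi \<in> S"
    and dc: "meetcl (covered_in S xi) - covered_in S xi = A \<union> B"
    and disj: "A \<inter> B = {}" and chA: "is_chain A" and chB: "is_chain B"
    and topA: "A \<noteq> {} \<Longrightarrow> is_top_of A xa"
    and topB: "B \<noteq> {} \<Longrightarrow> is_top_of B xb"
    and emA: "A = {} \<Longrightarrow> xa = xb"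
    and emB: "B = {} \<Longrightarrow> xb = xa"
  shows
   "(\<not> (\<exists>z\<in>covered_in S xi. attached_to_set S xi z A \<and> attached_to_set S xi z B) \<longrightarrow>
      (\<forall>xj\<in>S. mobius S xj xi =
        (if xj = xi then 1
         else if xj \<in> covered_in S xi then -1
         else if xj \<in> {xa, xb} \<and> maximal_in (A \<union> B) xj then eta S xi xj - 1
         else if xj \<in> {xa, xb} \<and> xj \<in> A \<union> B \<and> \<not> maximal_in (A \<union> B) xj then eta S xi xj
         else if xj \<in> A \<union> B \<and> \<not> maximal_in (A \<union> B) xj \<and> xj \<noteq> inf xa xb then eta S xi xj
         else if \<not> (xa \<le> xb \<or> xb \<le> xa) \<and> xj = inf xa xb \<and> xj \<in> A \<union> B then eta S xi xj + 1
         else 0)))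
    \<and>
    ((\<exists>!xp\<in>covered_in S xi. attached_to_set S xi xp A \<and> attached_to_set S xi xp B) \<longrightarrow>
      (\<forall>xj\<in>S. mobius S xj xi =
        (if xj = xi then 1
         else if xj \<in> covered_in S xi then -1
         else if xj = xa \<or> xj = xb then eta S xi xj - 1
         else if xj \<in> A \<union> B then eta S xi xj
         else 0)))"
proof -
  interpret double_chain S xi A B xa xb
    by unfold_locales (use finS mcl xiS dc disj chA chB topA topB emA emB in auto)
  show ?thesis
    using mobius_no_bridge mobius_single_bridge by blast
qed

end
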